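(* Let $c_0=(x_0,y_0,z_0)=(-0.2794,\,0.2451,\,0.36)\in\mathbb R^3$ and let $L=B(c_0,1)\cap B(-c_0,1)\subseteq\mathbb R^3$. Then $S_{e_3}(L)\notin\mathcal S_3$. More precisely, let $w=(0.4154,\,0.7262)$ and define, near $w$, \[ f_d(x,y)=-z_0+\sqrt{1-(x-x_0)^2-(y-y_0)^2},\qquad g_u(x,y)=-z_0+\sqrt{1-(x+x_0)^2-(y+y_0)^2}, \] and $h=(f_d+g_u)/2$. Then $w\in P_{e_3}(L)$, $L\cap((w,0)+\mathbb Re_3)=\{(w,z): -f_d(w)\le z\le g_u(w)\}$, the boundary of $S_{e_3}(L)$ near the points $(w,\pm h(w))$ is given by the graphs of $\pm h$, and the sectional curvature of this boundary at $(w,h(w))$ (and at $(w,-h(w))$) in direction $e_1$, \[ \kappa_h(w,e_1)=\frac{|(\nabla^2h(w))_{1,1}|}{\sqrt{1+\|\nabla h(w)\|^2}\,\bigl(1+\langle e_1,\nabla h(w)\rangle^2\bigr)}, \] is strictly smaller than $1$.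
   Context: For $c\in\mathbb R^3$, $B(c,1)$ is the closed Euclidean unit ball centered at $c$. $\mathcal S_3$ is the class of all intersections of families of closed Euclidean unit balls in $\mathbb R^3$; a set in $\mathcal S_3$ with smooth boundary has all sectional curvatures at least $1$ at every boundary point. $P_{e_3}$ is orthogonal projection onto $e_3^\perp\cong\mathbb R^2$. For a compact convex set $K$ and $u\in S^{2}$, for each $x\in P_{u^\perp}(K)$ write $K\cap(x+\mathbb Ru)=[x+a(x)u,x+b(x)u]$; the Steiner symmetral is $S_u(K)=\{x+yu: x\in P_{u^\perp}(K),\ |y|\le |b(x)-a(x)|/2\}$. *)

theory Defs
  imports "HOL-Analysis.Analysis"
begin

definition unit_ball3 :: "real^3 \<Rightarrow> (real^3) set" where
  "unit_ball3 c = cball c 1"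

definition S3 :: "(real^3) set set" where
  "S3 = {K. \<exists>F :: (real^3) set. K = (\<Inter>c\<in>F. unit_ball3 c)}"

definition proj_perp :: "real^3 \<Rightarrow> real^3 \<Rightarrow> real^3" where
  "proj_perp u p = p - (p \<bullet> u) *\<^sub>R u"

text \<open>Steiner symmetral: for x in the projection, the fibre K \<inter> (x + R u) is
  [x + a u, x + b u] with a = Inf, b = Sup of the parameter set.\<close>
definition steiner_sym :: "real^3 \<Rightarrow> (real^3) set \<Rightarrow> (real^3) set" where
  "steiner_sym u K =
     {x + y *\<^sub>R u | x y. x \<in> proj_perp u ` K \<and>
        \<bar>y\<bar> \<le> \<bar>Sup {t. x + t *\<^sub>R u \<in> K} - Inf {t. x + t *\<^sub>R u \<in> K}\<bar> / 2}"

definition e3 :: "real^3" where "e3 = axis 3 1"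

definition x0 :: real where "x0 = -0.2794"
definition y0 :: real where "y0 = 0.2451"
definition z0 :: real where "z0 = 0.36"
definition c0 :: "real^3" where "c0 = vector [x0, y0, z0]"
definition L :: "(real^3) set" where "L = unit_ball3 c0 \<inter> unit_ball3 (- c0)"
definition w :: "real \<times> real" where "w = (0.4154, 0.7262)"

definition f_d :: "real \<times> real \<Rightarrow> real" where
  "f_d p = - z0 + sqrt (1 - (fst p - x0)\<^sup>2 - (snd p - y0)\<^sup>2)"
definition g_u :: "real \<times> real \<Rightarrow> real" where
  "g_u p = - z0 + sqrt (1 - (fst p + x0)\<^sup>2 - (snd p + y0)\<^sup>2)"
definition h :: "real \<times> real \<Rightarrow> real" where
  "h p = (f_d p + g_u p) / 2"

definition pt :: "real \<times> real \<Rightarrow> real \<Rightarrow> real^3" where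
  "pt p z = vector [fst p, snd p, z]"

definition d1 :: "(real \<times> real \<Rightarrow> real) \<Rightarrow> real \<times> real \<Rightarrow> real" where
  "d1 f p = deriv (\<lambda>s. f (s, snd p)) (fst p)"
definition d2 :: "(real \<times> real \<Rightarrow> real) \<Rightarrow> real \<times> real \<Rightarrow> real" where
  "d2 f p = deriv (\<lambda>s. f (fst p, s)) (snd p)"

definition kappa_e1 :: "(real \<times> real \<Rightarrow> real) \<Rightarrow> real \<times> real \<Rightarrow> real" where
  "kappa_e1 f p = \<bar>d1 (d1 f) p\<bar> /
     (sqrt (1 + (d1 f p)\<^sup>2 + (d2 f p)\<^sup>2) * (1 + (d1 f p)\<^sup>2))"

end

theory Submission
  imports Defs
begin

(* Over an open neighbourhood of w the bottom of each vertical chord of L lies on the sphere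
   around c0 and its top on the sphere around -c0, so the chord over p is [-f_d p, g_u p] and
   the Steiner symmetral is {pt p z | |z| <= h p} there; its boundary is the pair of graphs of
   +h and -h. Differentiating h twice and enclosing the two square roots at w in short
   rational intervals gives kappa < 1.
   The failure of S_3 is witnessed by finitely many points: a member of S_3 contains every
   point lying in all unit balls through given points of it, and an explicit quadratic
   certificate shows that every unit ball through three points of the symmetral contains a
   point Q which, by rational enclosures of h, lies above the graph of h. *)

lemma dist_vec3_sq:
  "(dist (u::real^3) v)\<^sup>2 = (u$1 - v$1)\<^sup>2 + (u$2 - v$2)\<^sup>2 + (u$3 - v$3)\<^sup>2"
  by (simp only: dist_norm power2_norm_eq_inner) (simp add: inner_vec_def sum_3 power2_eq_square)

lemma dist_vec3_le_1_iff:
  "dist (u::real^3) v \<le> 1 \<longleftrightarrow> (u$1 - v$1)\<^sup>2 + (u$2 - v$2)\<^sup>2 + (u$3 - v$3)\<^sup>2 \<le> 1"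
  by (metis dist_vec3_sq abs_le_square_iff abs_one one_power2 zero_le_dist abs_of_nonneg)

lemma pt_nth [simp]: "pt p z $ 1 = fst p" "pt p z $ 2 = snd p" "pt p z $ 3 = z"
  by (simp_all add: pt_def)

lemma vec3_eq_pt: "v = pt (v$1, v$2) (v$3)"
  by (simp add: vec_eq_iff forall_3)

lemma vec3_eq_pt_iff: "v = pt p z \<longleftrightarrow> (v$1, v$2) = p \<and> v$3 = z"
  by (auto simp: vec_eq_iff forall_3)

lemma pt_eq_iff: "pt p z = pt p' z' \<longleftrightarrow> p = p' \<and> z = z'"
  by (auto simp: vec_eq_iff forall_3 prod_eq_iff)

lemma e3_nth [simp]: "e3 $ 1 = 0" "e3 $ 2 = 0" "e3 $ 3 = 1"
  by (simp_all add: e3_def axis_def)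

lemma proj_perp_e3: "proj_perp e3 v = pt (v$1, v$2) 0"
  by (simp add: proj_perp_def inner_vec_def sum_3 vec_eq_iff forall_3)

lemma pt_add_e3: "pt p a + t *\<^sub>R e3 = pt p (a + t)"
  by (simp add: vec_eq_iff forall_3)

lemma dist_pt_pt: "dist (pt p a) (pt p b) = \<bar>a - b\<bar>"
proof -
  have "(dist (pt p a) (pt p b))\<^sup>2 = (a - b)\<^sup>2"
    by (simp add: dist_vec3_sq)
  then show ?thesis
    by (metis real_sqrt_abs real_sqrt_unique zero_le_dist)
qed

lemma pt_mem_steiner_sym_e3_iff:
  assumes fibre: "{t. pt p t \<in> K} = {a..b}" and "a \<le> b"
  shows "pt p z \<in> steiner_sym e3 K \<longleftrightarrow> \<bar>z\<bar> \<le> (b - a) / 2"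
proof -
  have "{t. pt p 0 + t *\<^sub>R e3 \<in> K} = {a..b}"
    using fibre by (simp add: pt_add_e3)
  then have half_width:
    "\<bar>Sup {t. pt p 0 + t *\<^sub>R e3 \<in> K} - Inf {t. pt p 0 + t *\<^sub>R e3 \<in> K}\<bar> / 2 = (b - a) / 2"
    using \<open>a \<le> b\<close> by simp
  have "b \<in> {t. pt p t \<in> K}"
    unfolding fibre using \<open>a \<le> b\<close> by simp
  moreover have "proj_perp e3 (pt p b) = pt p 0"
    by (simp add: proj_perp_e3)
  ultimately have base: "pt p 0 \<in> proj_perp e3 ` K"
    by (metis image_eqI mem_Collect_eq)
  show ?thesis
  proof
    assume "pt p z \<in> steiner_sym e3 K"
    then obtain x y where xy: "pt p z = x + y *\<^sub>R e3" "x \<in> proj_perp e3 ` K"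
        "\<bar>y\<bar> \<le> \<bar>Sup {t. x + t *\<^sub>R e3 \<in> K} - Inf {t. x + t *\<^sub>R e3 \<in> K}\<bar> / 2"
      unfolding steiner_sym_def by blast
    from xy(2) obtain q where "x = pt q 0"
      by (auto simp: proj_perp_e3)
    with xy(1) have "x = pt p 0" "y = z"
      by (simp_all add: pt_add_e3 pt_eq_iff)
    with xy(3) half_width show "\<bar>z\<bar> \<le> (b - a) / 2"
      by simp
  next
    assume "\<bar>z\<bar> \<le> (b - a) / 2"
    with base half_width show "pt p z \<in> steiner_sym e3 K"
      unfolding steiner_sym_def by (intro CollectI exI[of _ "pt p 0"] exI[of _ z]) (simp add: pt_add_e3)
  qed
qed

lemma open_vec3_over_base:
  fixes F :: "real^3 \<Rightarrow> real"
  assumes "open U" and "continuous_on {v::real^3. (v$1, v$2) \<in> U} F"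
  shows "open {v. (v$1, v$2) \<in> U \<and> 0 < F v}"
proof -
  have "open ((\<lambda>v::real^3. (v$1, v$2)) -` U)"
    using assms(1) by (intro continuous_open_vimage) (auto intro!: continuous_intros)
  then have "open ({v::real^3. (v$1, v$2) \<in> U} \<inter> F -` {0<..})"
    using assms(2) by (intro continuous_open_preimage) (simp_all add: vimage_def open_greaterThan)
  then show ?thesis
    by (simp add: vimage_def Int_def)
qed

context
  fixes S :: "(real^3) set" and U :: "(real \<times> real) set" and \<phi> :: "real \<times> real \<Rightarrow> real"
  assumes open_base: "open U" and continuous_height: "continuous_on U \<phi>"
    and pt_mem_iff: "\<And>p z. p \<in> U \<Longrightarrow> pt p z \<in> S \<longleftrightarrow> \<bar>z\<bar> \<le> \<phi> p"
begin

lemma vec3_mem_iff: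
  assumes "(v$1, v$2) \<in> U"
  shows "v \<in> S \<longleftrightarrow> \<bar>v$3\<bar> \<le> \<phi> (v$1, v$2)"
  using pt_mem_iff[OF assms, of "v$3"] by (simp flip: vec3_eq_pt)

lemma frontier_pt_iff:
  assumes "p \<in> U"
  shows "pt p z \<in> frontier S \<longleftrightarrow> \<bar>z\<bar> = \<phi> p"
proof -
  have height: "continuous_on {v::real^3. (v$1, v$2) \<in> U} (\<lambda>v. \<phi> (v$1, v$2))"
    by (rule continuous_on_compose2[OF continuous_height]) (auto intro!: continuous_intros)
  consider "\<bar>z\<bar> < \<phi> p" | "\<phi> p < \<bar>z\<bar>" | "\<bar>z\<bar> = \<phi> p"
    by linarith
  then show ?thesis
  proof cases
    case 1
    let ?W = "{v::real^3. (v$1, v$2) \<in> U \<and> 0 < \<phi> (v$1, v$2) - \<bar>v$3\<bar>}"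
    have "open ?W"
      by (intro open_vec3_over_base open_base continuous_intros height)
    moreover have "?W \<subseteq> S"
      using vec3_mem_iff by auto
    ultimately have "pt p z \<in> interior S"
      using 1 \<open>p \<in> U\<close> by (intro interiorI[of ?W]) auto
    with 1 show ?thesis
      by (simp add: frontier_def)
  next
    case 2
    let ?W = "{v::real^3. (v$1, v$2) \<in> U \<and> 0 < \<bar>v$3\<bar> - \<phi> (v$1, v$2)}"
    have "open ?W"
      by (intro open_vec3_over_base open_base continuous_intros height)
    moreover have "S \<subseteq> - ?W"
      using vec3_mem_iff by auto
    ultimately have "closure S \<subseteq> - ?W"
      by (intro closure_minimal) (auto simp: closed_def)
    with 2 \<open>p \<in> U\<close> have "pt p z \<notin> closure S"
      by auto
    with 2 show ?thesis
      by (simp add: frontier_def)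
  next
    case 3
    have "pt p z \<notin> interior S"
    proof
      assume "pt p z \<in> interior S"
      then obtain e where "0 < e" "ball (pt p z) e \<subseteq> S"
        by (meson mem_interior)
      define d where "d = (if 0 \<le> z then e / 2 else - e / 2)"
      have "pt p (z + d) \<in> ball (pt p z) e"
        using \<open>0 < e\<close> by (simp add: dist_pt_pt d_def)
      with \<open>ball (pt p z) e \<subseteq> S\<close> have "\<bar>z + d\<bar> \<le> \<phi> p"
        using pt_mem_iff[OF \<open>p \<in> U\<close>] by blast
      moreover have "\<bar>z + d\<bar> = \<bar>z\<bar> + e / 2"
        using \<open>0 < e\<close> by (simp add: d_def abs_if)
      ultimately show False
        using 3 \<open>0 < e\<close> by linarith
    qed
    moreover have "pt p z \<in> S"
      using 3 pt_mem_iff[OF \<open>p \<in> U\<close>] by simp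
    ultimately show ?thesis
      using 3 by (simp add: frontier_def closure_subset[THEN subsetD])
  qed
qed

lemma frontier_local_graph:
  assumes positive: "\<And>p. p \<in> U \<Longrightarrow> 0 < \<phi> p" and "q \<in> U" and "\<bar>s\<bar> = 1"
  shows "\<exists>V. open V \<and> pt q (s * \<phi> q) \<in> V \<and>
           frontier S \<inter> V = {pt x (s * \<phi> x) | x. True} \<inter> V"
proof (intro exI conjI)
  let ?V = "{v::real^3. (v$1, v$2) \<in> U \<and> 0 < s * v$3}"
  have s: "s * s = 1"
    using \<open>\<bar>s\<bar> = 1\<close> by (metis abs_mult_self_eq mult_1_right)
  show "open ?V"
    by (intro open_vec3_over_base open_base continuous_intros)
  show "pt q (s * \<phi> q) \<in> ?V"
    using \<open>q \<in> U\<close> positive[of q] by (simp add: mult.assoc[symmetric] s)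
  show "frontier S \<inter> ?V = {pt x (s * \<phi> x) | x. True} \<inter> ?V"
  proof (intro set_eqI iffI)
    fix v
    assume v: "v \<in> frontier S \<inter> ?V"
    then have "\<bar>v$3\<bar> = \<phi> (v$1, v$2)"
      using frontier_pt_iff[of "(v$1, v$2)" "v$3"] by (simp flip: vec3_eq_pt)
    moreover have "0 < s * v$3" and "s = 1 \<or> s = -1"
      using v \<open>\<bar>s\<bar> = 1\<close> by auto
    ultimately have "v = pt (v$1, v$2) (s * \<phi> (v$1, v$2))"
      by (auto simp: vec3_eq_pt_iff)
    with v show "v \<in> {pt x (s * \<phi> x) | x. True} \<inter> ?V"
      by blast
  next
    fix v
    assume "v \<in> {pt x (s * \<phi> x) | x. True} \<inter> ?V"
    then obtain x where v: "v = pt x (s * \<phi> x)" "x \<in> U" "v \<in> ?V"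
      by auto
    have "\<bar>s * \<phi> x\<bar> = \<phi> x"
      using \<open>\<bar>s\<bar> = 1\<close> positive[OF \<open>x \<in> U\<close>] by (simp add: abs_mult)
    with v show "v \<in> frontier S \<inter> ?V"
      using frontier_pt_iff[OF \<open>x \<in> U\<close>] by simp
  qed
qed

end

definition rad2_d :: "real \<times> real \<Rightarrow> real" where
  "rad2_d p = 1 - (fst p - x0)\<^sup>2 - (snd p - y0)\<^sup>2"

definition rad2_u :: "real \<times> real \<Rightarrow> real" where
  "rad2_u p = 1 - (fst p + x0)\<^sup>2 - (snd p + y0)\<^sup>2"

lemma f_d_eq: "f_d p = sqrt (rad2_d p) - z0"
  by (simp add: f_d_def rad2_d_def)

lemma g_u_eq: "g_u p = sqrt (rad2_u p) - z0"
  by (simp add: g_u_def rad2_u_def)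

lemma h_eq: "h p = (sqrt (rad2_d p) + sqrt (rad2_u p)) / 2 - z0"
  by (simp add: h_def f_d_eq g_u_eq field_simps)

lemma continuous_h: "continuous_on UNIV h"
  unfolding h_eq rad2_d_def rad2_u_def by (intro continuous_intros) auto

lemma pt_mem_L_iff: "pt p t \<in> L \<longleftrightarrow> (t - z0)\<^sup>2 \<le> rad2_d p \<and> (t + z0)\<^sup>2 \<le> rad2_u p"
  unfolding L_def unit_ball3_def rad2_d_def rad2_u_def
  by (simp add: dist_commute[of _ "pt p t"] dist_vec3_le_1_iff c0_def power2_eq_square algebra_simps)

text \<open>Over this open set the bottom of each vertical fibre of \<open>L\<close> lies on the sphere
  around \<open>c0\<close> and the top on the sphere around \<open>-c0\<close>, and the fibre is nonempty.\<close>
definition regular_base :: "(real \<times> real) set" where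
  "regular_base = {p. 0 < rad2_d p \<and> 0 < rad2_u p \<and>
     \<bar>sqrt (rad2_d p) - sqrt (rad2_u p)\<bar> < 2 * z0 \<and> 0 < h p}"

lemma open_regular_base: "open regular_base"
  unfolding regular_base_def h_eq rad2_d_def rad2_u_def
  by (intro open_Collect_conj open_Collect_less continuous_intros) auto

lemma fibre_L:
  assumes "p \<in> regular_base"
  shows "{t. pt p t \<in> L} = {- f_d p .. g_u p}"
proof -
  have sq_le_iff: "s\<^sup>2 \<le> A \<longleftrightarrow> \<bar>s\<bar> \<le> sqrt A" if "0 \<le> A" for s A :: real
    using that by (metis real_sqrt_abs real_sqrt_le_iff)
  have "0 \<le> rad2_d p" "0 \<le> rad2_u p"
    and "sqrt (rad2_d p) - sqrt (rad2_u p) < 2 * z0" "sqrt (rad2_u p) - sqrt (rad2_d p) < 2 * z0"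
    using assms by (auto simp: regular_base_def abs_less_iff)
  then show ?thesis
    unfolding pt_mem_L_iff f_d_eq g_u_eq by (auto simp: sq_le_iff abs_le_iff)
qed

lemma pt_mem_steiner_L_iff:
  assumes "p \<in> regular_base"
  shows "pt p z \<in> steiner_sym e3 L \<longleftrightarrow> \<bar>z\<bar> \<le> h p"
proof -
  have "- f_d p \<le> g_u p"
    using assms by (simp add: regular_base_def h_def)
  with fibre_L[OF assms] show ?thesis
    by (simp add: pt_mem_steiner_sym_e3_iff h_def add.commute)
qed

context
  fixes p :: "real \<times> real" and lo_d up_d lo_u up_u :: real
  assumes enclosure: "lo_d\<^sup>2 \<le> rad2_d p" "rad2_d p \<le> up_d\<^sup>2" "lo_u\<^sup>2 \<le> rad2_u p" "rad2_u p \<le> up_u\<^sup>2"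
    and positive: "0 < lo_d" "0 < lo_u" "0 \<le> up_d" "0 \<le> up_u"
    and separated: "up_d - lo_u < 2 * z0" "up_u - lo_d < 2 * z0" "2 * z0 < lo_d + lo_u"
begin

lemma sqrt_rad2_enclosure:
  "lo_d \<le> sqrt (rad2_d p)" "sqrt (rad2_d p) \<le> up_d" "lo_u \<le> sqrt (rad2_u p)" "sqrt (rad2_u p) \<le> up_u"
  using enclosure positive by (simp_all add: real_le_rsqrt real_le_lsqrt)

lemma mem_regular_base_by_enclosure: "p \<in> regular_base"
proof -
  have "0 < sqrt (rad2_d p)" "0 < sqrt (rad2_u p)"
    using sqrt_rad2_enclosure positive by linarith+
  then show ?thesis
    using sqrt_rad2_enclosure separated by (auto simp: regular_base_def h_eq)
qed

lemma pt_mem_steiner_L_by_enclosure: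
  assumes "\<bar>z\<bar> \<le> (lo_d + lo_u) / 2 - z0"
  shows "pt p z \<in> steiner_sym e3 L"
  using assms sqrt_rad2_enclosure
  unfolding pt_mem_steiner_L_iff[OF mem_regular_base_by_enclosure] h_eq by argo

lemma pt_not_mem_steiner_L_by_enclosure:
  assumes "(up_d + up_u) / 2 - z0 < \<bar>z\<bar>"
  shows "pt p z \<notin> steiner_sym e3 L"
  using assms sqrt_rad2_enclosure
  unfolding pt_mem_steiner_L_iff[OF mem_regular_base_by_enclosure] h_eq by argo

end

lemma w_mem_regular_base: "w \<in> regular_base"
  by (rule mem_regular_base_by_enclosure[where lo_d = "0.5345" and up_d = "0.5347"
        and lo_u = "0.1951" and up_u = "0.1952"])
    (simp_all add: rad2_d_def rad2_u_def w_def x0_def y0_def z0_def power2_eq_square)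

lemma frontier_steiner_L_local_graph:
  assumes "q \<in> regular_base" and "\<bar>s\<bar> = 1"
  shows "\<exists>V. open V \<and> pt q (s * h q) \<in> V \<and>
           frontier (steiner_sym e3 L) \<inter> V = {pt x (s * h x) | x. True} \<inter> V"
  by (rule frontier_local_graph[OF open_regular_base continuous_on_subset[OF continuous_h]
        pt_mem_steiner_L_iff _ assms]) (auto simp: regular_base_def)

lemma has_real_derivative_sqrt_circle:
  fixes r a s :: real
  assumes "0 < r - (s - a)\<^sup>2"
  shows "((\<lambda>s. sqrt (r - (s - a)\<^sup>2)) has_real_derivative - (s - a) / sqrt (r - (s - a)\<^sup>2)) (at s)"
  using assms by (auto intro!: derivative_eq_intros simp: field_simps)

lemma has_real_derivative_circle_slope:
  fixes r a s :: real
  assumes "0 < r - (s - a)\<^sup>2"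
  shows "((\<lambda>s. (s - a) / sqrt (r - (s - a)\<^sup>2)) has_real_derivative r / sqrt (r - (s - a)\<^sup>2) ^ 3) (at s)"
proof -
  define \<sigma> where "\<sigma> = sqrt (r - (s - a)\<^sup>2)"
  have "0 < \<sigma>" and \<sigma>_sq: "\<sigma>\<^sup>2 = r - (s - a)\<^sup>2"
    using assms by (simp_all add: \<sigma>_def)
  have "((\<lambda>s. (s - a) / sqrt (r - (s - a)\<^sup>2)) has_real_derivative
      (1 * \<sigma> - (s - a) * (- (s - a) / \<sigma>)) / (\<sigma> * \<sigma>)) (at s)"
    using \<open>0 < \<sigma>\<close> unfolding \<sigma>_def
    by (intro DERIV_divide has_real_derivative_sqrt_circle assms) (auto intro!: derivative_eq_intros)
  moreover have "(1 * \<sigma> - (s - a) * (- (s - a) / \<sigma>)) / (\<sigma> * \<sigma>) = r / \<sigma> ^ 3"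
    using \<open>0 < \<sigma>\<close> \<sigma>_sq by (simp add: field_simps power2_eq_square power3_eq_cube)
  ultimately show ?thesis
    unfolding \<sigma>_def by simp
qed

(* Written with s - - x0 so that both summands of h match has_real_derivative_sqrt_circle. *)
lemma rad2_along_fst:
  "rad2_d (s, y) = (1 - (y - y0)\<^sup>2) - (s - x0)\<^sup>2" "rad2_u (s, y) = (1 - (y + y0)\<^sup>2) - (s - - x0)\<^sup>2"
  by (simp_all add: rad2_d_def rad2_u_def)

lemma rad2_along_snd:
  "rad2_d (x, t) = (1 - (x - x0)\<^sup>2) - (t - y0)\<^sup>2" "rad2_u (x, t) = (1 - (x + x0)\<^sup>2) - (t - - y0)\<^sup>2"
  by (simp_all add: rad2_d_def rad2_u_def)

lemma d1_h:
  assumes "0 < rad2_d p" "0 < rad2_u p"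
  shows "d1 h p = - ((fst p - x0) / sqrt (rad2_d p) + (fst p + x0) / sqrt (rad2_u p)) / 2"
proof (cases p)
  case (Pair x y)
  have "((\<lambda>s. h (s, y)) has_real_derivative
      (- (x - x0) / sqrt (rad2_d (x, y)) + - (x - - x0) / sqrt (rad2_u (x, y))) / 2 - 0) (at x)"
    using assms unfolding h_eq rad2_along_fst Pair
    by (intro DERIV_diff DERIV_cdivide DERIV_add has_real_derivative_sqrt_circle DERIV_const)
  then have "d1 h p = (- (x - x0) / sqrt (rad2_d (x, y)) + - (x - - x0) / sqrt (rad2_u (x, y))) / 2 - 0"
    unfolding d1_def Pair fst_conv snd_conv by (rule DERIV_imp_deriv)
  then show ?thesis
    unfolding Pair fst_conv snd_conv by argo
qed

lemma d2_h:
  assumes "0 < rad2_d p" "0 < rad2_u p"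
  shows "d2 h p = - ((snd p - y0) / sqrt (rad2_d p) + (snd p + y0) / sqrt (rad2_u p)) / 2"
proof (cases p)
  case (Pair x y)
  have "((\<lambda>t. h (x, t)) has_real_derivative
      (- (y - y0) / sqrt (rad2_d (x, y)) + - (y - - y0) / sqrt (rad2_u (x, y))) / 2 - 0) (at y)"
    using assms unfolding h_eq rad2_along_snd Pair
    by (intro DERIV_diff DERIV_cdivide DERIV_add has_real_derivative_sqrt_circle DERIV_const)
  then have "d2 h p = (- (y - y0) / sqrt (rad2_d (x, y)) + - (y - - y0) / sqrt (rad2_u (x, y))) / 2 - 0"
    unfolding d2_def Pair fst_conv snd_conv by (rule DERIV_imp_deriv)
  then show ?thesis
    unfolding Pair fst_conv snd_conv by argo
qed

lemma d1_d1_h: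
  assumes "0 < rad2_d p" "0 < rad2_u p"
  shows "d1 (d1 h) p =
    - ((1 - (snd p - y0)\<^sup>2) / sqrt (rad2_d p) ^ 3 + (1 - (snd p + y0)\<^sup>2) / sqrt (rad2_u p) ^ 3) / 2"
proof (cases p)
  case (Pair x y)
  let ?S = "{s. 0 < rad2_d (s, y) \<and> 0 < rad2_u (s, y)}"
  have "((\<lambda>s. - ((s - x0) / sqrt (rad2_d (s, y)) + (s - - x0) / sqrt (rad2_u (s, y))) / 2)
      has_real_derivative - ((1 - (y - y0)\<^sup>2) / sqrt (rad2_d (x, y)) ^ 3
        + (1 - (y + y0)\<^sup>2) / sqrt (rad2_u (x, y)) ^ 3) / 2) (at x)"
    using assms unfolding rad2_along_fst Pair
    by (intro DERIV_cdivide DERIV_minus DERIV_add has_real_derivative_circle_slope)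
  moreover have "open ?S"
    unfolding rad2_d_def rad2_u_def by (intro open_Collect_conj open_Collect_less continuous_intros)
  moreover have "x \<in> ?S"
    using assms Pair by simp
  moreover have "- ((s - x0) / sqrt (rad2_d (s, y)) + (s - - x0) / sqrt (rad2_u (s, y))) / 2 = d1 h (s, y)"
    if "s \<in> ?S" for s
    using that by (simp add: d1_h)
  ultimately have "((\<lambda>s. d1 h (s, y)) has_real_derivative - ((1 - (y - y0)\<^sup>2) / sqrt (rad2_d (x, y)) ^ 3
        + (1 - (y + y0)\<^sup>2) / sqrt (rad2_u (x, y)) ^ 3) / 2) (at x)"
    by (rule has_field_derivative_transform_within_open)
  then show ?thesis
    unfolding d1_def[of "d1 h"] Pair fst_conv snd_conv by (rule DERIV_imp_deriv)
qed

lemma kappa_e1_less_1: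
  fixes n g k :: real
  assumes "\<bar>d1 (d1 f) p\<bar> \<le> n" "g \<le> \<bar>d1 f p\<bar>" "k \<le> \<bar>d2 f p\<bar>" "0 \<le> g" "0 \<le> k"
    and "n\<^sup>2 < (1 + g\<^sup>2 + k\<^sup>2) * (1 + g\<^sup>2)\<^sup>2"
  shows "kappa_e1 f p < 1"
proof -
  have g: "g\<^sup>2 \<le> (d1 f p)\<^sup>2" and k: "k\<^sup>2 \<le> (d2 f p)\<^sup>2"
    using assms(2-5) power_mono[of g "\<bar>d1 f p\<bar>" 2] power_mono[of k "\<bar>d2 f p\<bar>" 2] by simp_all
  have "\<bar>d1 (d1 f) p\<bar> \<le> sqrt (n\<^sup>2)"
    using assms(1) by simp
  also have "\<dots> < sqrt ((1 + g\<^sup>2 + k\<^sup>2) * (1 + g\<^sup>2)\<^sup>2)"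
    using assms(6) by (rule real_sqrt_less_mono)
  also have "\<dots> = sqrt (1 + g\<^sup>2 + k\<^sup>2) * (1 + g\<^sup>2)"
    by (simp add: real_sqrt_mult)
  also have "\<dots> \<le> sqrt (1 + (d1 f p)\<^sup>2 + (d2 f p)\<^sup>2) * (1 + (d1 f p)\<^sup>2)"
    using g k by (intro mult_mono) auto
  finally show ?thesis
    unfolding kappa_e1_def by (simp add: divide_less_eq add_pos_nonneg)
qed

lemma sum_div_powers_antimono:
  fixes a b l1 l2 r1 r2 :: real
  assumes "0 \<le> a" "0 \<le> b" "0 < l1" "l1 \<le> r1" "0 < l2" "l2 \<le> r2"
  shows "a / r1 ^ m + b / r2 ^ m \<le> a / l1 ^ m + b / l2 ^ m"
  using assms by (intro add_mono divide_left_mono power_mono mult_pos_pos zero_less_power) auto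

lemma kappa_e1_h_w_less_1: "kappa_e1 h w < 1"
proof -
  define a1 a2 b1 b2 c1 c2 where "a1 = fst w - x0" and "a2 = fst w + x0"
    and "b1 = snd w - y0" and "b2 = snd w + y0" and "c1 = 1 - (snd w - y0)\<^sup>2" and "c2 = 1 - (snd w + y0)\<^sup>2"
  note at_w = rad2_d_def rad2_u_def w_def x0_def y0_def power2_eq_square
  have pos: "0 < rad2_d w" "0 < rad2_u w"
    by (simp_all add: at_w)
  have r1: "0.5345 \<le> sqrt (rad2_d w)" "sqrt (rad2_d w) \<le> 0.5347"
    by (rule real_le_rsqrt real_le_lsqrt; simp add: at_w)+
  have r2: "0.1951 \<le> sqrt (rad2_u w)" "sqrt (rad2_u w) \<le> 0.1952"
    by (rule real_le_rsqrt real_le_lsqrt; simp add: at_w)+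
  have signs: "0 \<le> a1" "0 \<le> a2" "0 \<le> b1" "0 \<le> b2" "0 \<le> c1" "0 \<le> c2"
    unfolding a1_def a2_def b1_def b2_def c1_def c2_def by (simp_all add: at_w)
  show ?thesis
  proof (rule kappa_e1_less_1)
    have "0 \<le> c1 / sqrt (rad2_d w) ^ 3 + c2 / sqrt (rad2_u w) ^ 3"
      using signs pos by (intro add_nonneg_nonneg divide_nonneg_nonneg) auto
    then have "\<bar>d1 (d1 h) w\<bar> = (c1 / sqrt (rad2_d w) ^ 3 + c2 / sqrt (rad2_u w) ^ 3) / 2"
      by (simp add: d1_d1_h[OF pos] c1_def c2_def)
    also have "\<dots> \<le> (c1 / 0.5345 ^ 3 + c2 / 0.1951 ^ 3) / 2"
      using signs r1(1) r2(1) by (intro divide_right_mono sum_div_powers_antimono) simp_all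
    finally show "\<bar>d1 (d1 h) w\<bar> \<le> (c1 / 0.5345 ^ 3 + c2 / 0.1951 ^ 3) / 2" .
    have "0 \<le> a1 / sqrt (rad2_d w) + a2 / sqrt (rad2_u w)"
      using signs pos by (intro add_nonneg_nonneg divide_nonneg_nonneg) auto
    then have "\<bar>d1 h w\<bar> = (a1 / sqrt (rad2_d w) + a2 / sqrt (rad2_u w)) / 2"
      by (simp add: d1_h[OF pos] a1_def a2_def)
    moreover have "a1 / 0.5347 + a2 / 0.1952 \<le> a1 / sqrt (rad2_d w) + a2 / sqrt (rad2_u w)"
      using sum_div_powers_antimono[OF signs(1,2) _ r1(2) _ r2(2), of 1] r1 r2 pos by simp
    ultimately show "(a1 / 0.5347 + a2 / 0.1952) / 2 \<le> \<bar>d1 h w\<bar>"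
      by simp
    have "0 \<le> b1 / sqrt (rad2_d w) + b2 / sqrt (rad2_u w)"
      using signs pos by (intro add_nonneg_nonneg divide_nonneg_nonneg) auto
    then have "\<bar>d2 h w\<bar> = (b1 / sqrt (rad2_d w) + b2 / sqrt (rad2_u w)) / 2"
      by (simp add: d2_h[OF pos] b1_def b2_def)
    moreover have "b1 / 0.5347 + b2 / 0.1952 \<le> b1 / sqrt (rad2_d w) + b2 / sqrt (rad2_u w)"
      using sum_div_powers_antimono[OF signs(3,4) _ r1(2) _ r2(2), of 1] r1 r2 pos by simp
    ultimately show "(b1 / 0.5347 + b2 / 0.1952) / 2 \<le> \<bar>d2 h w\<bar>"
      by simp
  qed (simp_all add: a1_def a2_def b1_def b2_def c1_def c2_def at_w power3_eq_cube)
qed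

lemma mem_S3_if_unit_balls_through:
  assumes "K \<in> S3" and "P \<subseteq> K" and "\<And>c. P \<subseteq> cball c 1 \<Longrightarrow> q \<in> cball c 1"
  shows "q \<in> K"
proof -
  obtain F where K: "K = (\<Inter>c\<in>F. cball c 1)"
    using assms(1) by (auto simp: S3_def unit_ball3_def)
  with assms(2,3) show ?thesis
    by blast
qed

lemma unit_ball_through_witnesses:
  fixes c :: "real^3"
  assumes "{pt (0.355, 0.74) 0.0141427, pt (0.3, 0.74) 0.0491658, pt (0.33, 0.739) 0.0352461}
    \<subseteq> cball c 1"
  shows "pt (0.33, 0.74) 0.0319052 \<in> cball c 1"
proof -
  define a b z where "a = c$1" and "b = c$2" and "z = c$3"
  have P: "(a - 0.355)\<^sup>2 + (b - 0.74)\<^sup>2 + (z - 0.0141427)\<^sup>2 \<le> 1"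
    "(a - 0.3)\<^sup>2 + (b - 0.74)\<^sup>2 + (z - 0.0491658)\<^sup>2 \<le> 1"
    "(a - 0.33)\<^sup>2 + (b - 0.739)\<^sup>2 + (z - 0.0352461)\<^sup>2 \<le> 1"
    using assms unfolding a_def b_def z_def by (auto simp: dist_vec3_le_1_iff)
  (* |c - Q|^2 - 1 = sum_i lambda_i (|c - P_i|^2 - 1) - mu |c - m|^2 - g with lambda_i, mu, g > 0;
     the coefficients were found numerically and the identity is checked exactly. *)
  have certificate: "(a - 0.33)\<^sup>2 + (b - 0.74)\<^sup>2 + (z - 0.0319052)\<^sup>2 - 1 =
      0.365145 * ((a - 0.355)\<^sup>2 + (b - 0.74)\<^sup>2 + (z - 0.0141427)\<^sup>2 - 1)
    + 0.306409 * ((a - 0.3)\<^sup>2 + (b - 0.74)\<^sup>2 + (z - 0.0491658)\<^sup>2 - 1)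
    + 0.328795 * ((a - 0.33)\<^sup>2 + (b - 0.739)\<^sup>2 + (z - 0.0352461)\<^sup>2 - 1)
    - 0.000349 * ((a - 2061 / 13960)\<^sup>2 + (b + 14107 / 69800)\<^sup>2 + (z + 218696867 / 872500000)\<^sup>2)
    - 2834799349981077 / 174500000000000000000"
    by (simp add: power2_eq_square algebra_simps) (simp add: field_simps)
  have combine: "q < 1"
    if "q - 1 = l0 * (s0 - 1) + l1 * (s1 - 1) + l2 * (s2 - 1) - \<mu> * n - g"
      and "s0 \<le> 1" "s1 \<le> 1" "s2 \<le> 1" "0 \<le> l0" "0 \<le> l1" "0 \<le> l2" "0 \<le> \<mu>" "0 \<le> n" "0 < g"
    for q s0 s1 s2 n l0 l1 l2 \<mu> g :: real
  proof -
    have "l0 * (s0 - 1) \<le> 0" "l1 * (s1 - 1) \<le> 0" "l2 * (s2 - 1) \<le> 0" "0 \<le> \<mu> * n"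
      using that by (simp_all add: mult_nonneg_nonpos)
    with that(1,10) show ?thesis
      by linarith
  qed
  have "(a - 0.33)\<^sup>2 + (b - 0.74)\<^sup>2 + (z - 0.0319052)\<^sup>2 < 1"
    by (rule combine[OF certificate P]) simp_all
  then show ?thesis
    unfolding a_def b_def z_def by (simp add: dist_vec3_le_1_iff)
qed

lemma steiner_L_not_mem_S3: "steiner_sym e3 L \<notin> S3"
proof
  note numerics = rad2_d_def rad2_u_def x0_def y0_def z0_def power2_eq_square
  assume "steiner_sym e3 L \<in> S3"
  moreover have "{pt (0.355, 0.74) 0.0141427, pt (0.3, 0.74) 0.0491658, pt (0.33, 0.739) 0.0352461}
      \<subseteq> steiner_sym e3 L"
  proof -
    have "pt (0.355, 0.74) 0.0141427 \<in> steiner_sym e3 L"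
      by (rule pt_mem_steiner_L_by_enclosure[where lo_d = "0.593810264" and up_d = "0.593810265"
          and lo_u = "0.154475337" and up_u = "0.154475338"]) (simp_all add: numerics)
    moreover have "pt (0.3, 0.74) 0.0491658 \<in> steiner_sym e3 L"
      by (rule pt_mem_steiner_L_by_enclosure[where lo_d = "0.647587546" and up_d = "0.647587547"
          and lo_u = "0.170744341" and up_u = "0.170744342"]) (simp_all add: numerics)
    moreover have "pt (0.33, 0.739) 0.0352461 \<in> steiner_sym e3 L"
      by (rule pt_mem_steiner_L_by_enclosure[where lo_d = "0.620237398" and up_d = "0.620237399"
          and lo_u = "0.17025519" and up_u = "0.170255191"]) (simp_all add: numerics)
    ultimately show ?thesis
      by simp
  qed
  moreover have "pt (0.33, 0.74) 0.0319052 \<notin> steiner_sym e3 L"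
    by (rule pt_not_mem_steiner_L_by_enclosure[where lo_d = "0.619439771" and up_d = "0.619439772"
        and lo_u = "0.164370404" and up_u = "0.164370405"]) (simp_all add: numerics)
  ultimately show False
    using mem_S3_if_unit_balls_through unit_ball_through_witnesses by blast
qed

theorem theorem4p4:
  shows "steiner_sym e3 L \<notin> S3
    \<and> pt w 0 \<in> proj_perp e3 ` L
    \<and> {p \<in> L. \<exists>z. p = pt w z} = {pt w z | z. - f_d w \<le> z \<and> z \<le> g_u w}
    \<and> (\<exists>V. open V \<and> pt w (h w) \<in> V \<and>
          frontier (steiner_sym e3 L) \<inter> V = {pt x (h x) | x. True} \<inter> V)
    \<and> (\<exists>V. open V \<and> pt w (- h w) \<in> V \<and>
          frontier (steiner_sym e3 L) \<inter> V = {pt x (- h x) | x. True} \<inter> V)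
    \<and> kappa_e1 h w < 1"
proof (intro conjI)
  show "steiner_sym e3 L \<notin> S3"
    by (rule steiner_L_not_mem_S3)
  have fibre: "pt w t \<in> L \<longleftrightarrow> - f_d w \<le> t \<and> t \<le> g_u w" for t
    using fibre_L[OF w_mem_regular_base] by (simp add: set_eq_iff)
  have "pt w (g_u w) \<in> L"
    using fibre w_mem_regular_base by (simp add: regular_base_def h_def)
  then show "pt w 0 \<in> proj_perp e3 ` L"
    by (rule image_eqI[rotated]) (simp add: proj_perp_e3)
  show "{p \<in> L. \<exists>z. p = pt w z} = {pt w z | z. - f_d w \<le> z \<and> z \<le> g_u w}"
    using fibre by blast
  show "\<exists>V. open V \<and> pt w (h w) \<in> V \<and>
      frontier (steiner_sym e3 L) \<inter> V = {pt x (h x) | x. True} \<inter> V"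
    using frontier_steiner_L_local_graph[OF w_mem_regular_base, of 1] by simp
  show "\<exists>V. open V \<and> pt w (- h w) \<in> V \<and>
      frontier (steiner_sym e3 L) \<inter> V = {pt x (- h x) | x. True} \<inter> V"
    using frontier_steiner_L_local_graph[OF w_mem_regular_base, of "-1"] by simp
  show "kappa_e1 h w < 1"
    by (rule kappa_e1_h_w_less_1)
qed

end
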